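(* Let $G_1=(V,D_1)$ and $G_2=(V,D_2)$ be directed graphs with the same Jacobian matroid. If two nodes $i\neq j$ are adjacent or have a common child in one of the graphs, then they are adjacent or have a common child in the other graph.
   Context: A directed graph $G=(V,D)$ has edge set $D\subseteq V\times V$ of ordered pairs $(i,j)$, $i\neq j$. $\Lambda$ is the $V\times V$ matrix with indeterminate entries $\lambda_{ij}$ for $(i,j)\in D$ and zeros elsewhere, and $s$ is a further indeterminate. Let $\psi_G(\Lambda,s)=s(I-\Lambda)(I-\Lambda)^T=K$. The transposed Jacobian $J(\psi_G)$ has rows indexed by $\{\lambda_{kl}:(k,l)\in D\}\cup\{s\}$ and columns indexed by $K_{ij}$, $i\le j$, with entries $\partial K_{ij}/\partial\theta$. The Jacobian matroid of $G$ is the matroid on the column labels $\{K_{ij}\}$ in which a set is independent iff its columns are linearly independent over $\mathbb{R}(\lambda,s)$. *)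

theory Defs
  imports "HOL-Analysis.Analysis"
begin

text \<open>Parameters: \<open>Some (k,l)\<close> stands for \<open>\<lambda>_kl\<close> ((k,l) in D), \<open>None\<close> stands for s.\<close>

definition digraph :: "'v set \<Rightarrow> ('v \<times> 'v) set \<Rightarrow> bool" where
  "digraph V D \<longleftrightarrow> D \<subseteq> V \<times> V \<and> (\<forall>i. (i, i) \<notin> D)"

definition params :: "('v \<times> 'v) set \<Rightarrow> ('v \<times> 'v) option set" where
  "params D = insert None (Some ` D)"

definition Lam :: "('v \<times> 'v) set \<Rightarrow> (('v \<times> 'v) option \<Rightarrow> real) \<Rightarrow> 'v \<Rightarrow> 'v \<Rightarrow> real" where
  "Lam D \<theta> i j = (if (i, j) \<in> D then \<theta> (Some (i, j)) else 0)"

text \<open>\<open>K = s (I - \<Lambda>)(I - \<Lambda>)^T\<close>, entry (i,j).\<close>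
definition Kmat :: "'v set \<Rightarrow> ('v \<times> 'v) set \<Rightarrow> (('v \<times> 'v) option \<Rightarrow> real) \<Rightarrow> 'v \<Rightarrow> 'v \<Rightarrow> real" where
  "Kmat V D \<theta> i j = \<theta> None *
     (\<Sum>k\<in>V. ((if i = k then 1 else 0) - Lam D \<theta> i k) * ((if j = k then 1 else 0) - Lam D \<theta> j k))"

text \<open>Column labels \<open>K_ij\<close>, \<open>i \<le> j\<close>.\<close>
definition jac_cols :: "('v::linorder) set \<Rightarrow> ('v \<times> 'v) set" where
  "jac_cols V = {(i, j). i \<in> V \<and> j \<in> V \<and> i \<le> j}"

definition jac_entry :: "'v set \<Rightarrow> ('v \<times> 'v) set \<Rightarrow> ('v \<times> 'v) option \<Rightarrow> 'v \<times> 'v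
    \<Rightarrow> (('v \<times> 'v) option \<Rightarrow> real) \<Rightarrow> real" where
  "jac_entry V D x c \<theta> = deriv (\<lambda>t. Kmat V D (\<theta>(x := t)) (fst c) (snd c)) (\<theta> x)"

text \<open>Real polynomial functions in the variables \<open>X\<close> (= the polynomial ring \<open>\<real>[X]\<close>,
  since \<open>\<real>\<close> is infinite).\<close>
inductive poly_fun :: "'a set \<Rightarrow> (('a \<Rightarrow> real) \<Rightarrow> real) \<Rightarrow> bool" for X where
  const: "poly_fun X (\<lambda>\<theta>. c)"
| var: "x \<in> X \<Longrightarrow> poly_fun X (\<lambda>\<theta>. \<theta> x)"
| add: "poly_fun X p \<Longrightarrow> poly_fun X q \<Longrightarrow> poly_fun X (\<lambda>\<theta>. p \<theta> + q \<theta>)"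
| mult: "poly_fun X p \<Longrightarrow> poly_fun X q \<Longrightarrow> poly_fun X (\<lambda>\<theta>. p \<theta> * q \<theta>)"

text \<open>Independence in the Jacobian matroid: the columns in S are linearly independent over
  \<open>\<real>(\<lambda>,s)\<close>; equivalently (clearing denominators) there is no nontrivial linear relation
  with coefficients in the polynomial ring \<open>\<real>[\<lambda>,s]\<close>.\<close>
definition jac_indep :: "('v::linorder) set \<Rightarrow> ('v \<times> 'v) set \<Rightarrow> ('v \<times> 'v) set \<Rightarrow> bool" where
  "jac_indep V D S \<longleftrightarrow> S \<subseteq> jac_cols V \<and>
     \<not> (\<exists>c. (\<forall>col\<in>S. poly_fun (params D) (c col)) \<and> (\<exists>col\<in>S. c col \<noteq> (\<lambda>_. 0)) \<and>
           (\<forall>x\<in>params D. \<forall>\<theta>. (\<Sum>col\<in>S. c col \<theta> * jac_entry V D x col \<theta>) = 0))"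

definition same_jacobian_matroid :: "('v::linorder) set \<Rightarrow> ('v \<times> 'v) set \<Rightarrow> ('v \<times> 'v) set \<Rightarrow> bool" where
  "same_jacobian_matroid V D1 D2 \<longleftrightarrow> (\<forall>S. jac_indep V D1 S \<longleftrightarrow> jac_indep V D2 S)"

definition adjacent :: "('v \<times> 'v) set \<Rightarrow> 'v \<Rightarrow> 'v \<Rightarrow> bool" where
  "adjacent D i j \<longleftrightarrow> (i, j) \<in> D \<or> (j, i) \<in> D"

definition common_child :: "('v \<times> 'v) set \<Rightarrow> 'v \<Rightarrow> 'v \<Rightarrow> bool" where
  "common_child D i j \<longleftrightarrow> (\<exists>k. (i, k) \<in> D \<and> (j, k) \<in> D)"

end

theory Submission
  imports Defs
begin

text \<open>For \<open>i \<noteq> j\<close> the entry \<open>K_ij = s (\<Sum>\<^sub>k\<^sub>\<noteq>\<^sub>i\<^sub>,\<^sub>j \<lambda>_ik \<lambda>_jk - \<lambda>_ij - \<lambda>_ji)\<close> is a polynomial whose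
  monomials are distinct, so it vanishes identically exactly when \<open>i, j\<close> are neither adjacent
  nor have a common child. If it vanishes, the single column \<open>K_ij\<close> of the Jacobian is zero and
  hence dependent; otherwise its \<open>s\<close>-row entry \<open>K_ij / s\<close> is a nonzero polynomial, and the column
  is independent. So \<open>{K_ij}\<close> is independent in the Jacobian matroid iff \<open>i, j\<close> are adjacent or
  have a common child, a property the two graphs therefore share.\<close>

lemma poly_fun_continuous_on_upd:
  assumes "poly_fun X p"
  shows "continuous_on UNIV (\<lambda>t. p (\<theta>(x := t)))"
  using assms
proof induction
  case (var y)
  then show ?case by (cases "y = x") (auto intro!: continuous_intros)
qed (auto intro!: continuous_intros)

lemma poly_fun_nonzero_upd_avoiding:
  assumes "poly_fun X p" "p \<theta> \<noteq> 0"
  obtains t where "t \<noteq> r" "p (\<theta>(x := t)) \<noteq> 0"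
proof -
  have "continuous (at (\<theta> x)) (\<lambda>t. p (\<theta>(x := t)))"
    using poly_fun_continuous_on_upd[OF assms(1)] by (simp add: continuous_on_eq_continuous_at)
  moreover have "p (\<theta>(x := \<theta> x)) \<noteq> 0" using assms(2) by simp
  ultimately obtain e where "e > 0" and e: "\<And>t. dist (\<theta> x) t < e \<Longrightarrow> p (\<theta>(x := t)) \<noteq> 0"
    using continuous_at_avoid by blast
  define t where "t = (if \<theta> x + e/2 = r then \<theta> x + e/4 else \<theta> x + e/2)"
  have "t \<noteq> r" "dist (\<theta> x) t < e" using \<open>e > 0\<close> by (auto simp: t_def dist_real_def)
  then show ?thesis using e that by blast
qed

definition gram_entry :: "'v set \<Rightarrow> ('v \<times> 'v) set \<Rightarrow> (('v \<times> 'v) option \<Rightarrow> real) \<Rightarrow> 'v \<Rightarrow> 'v \<Rightarrow> real"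
  where "gram_entry V D \<theta> a b =
    (\<Sum>k\<in>V. ((if a = k then 1 else 0) - Lam D \<theta> a k) * ((if b = k then 1 else 0) - Lam D \<theta> b k))"

lemma Kmat_eq_gram_entry: "Kmat V D \<theta> a b = \<theta> None * gram_entry V D \<theta> a b"
  by (simp add: Kmat_def gram_entry_def)

lemma gram_entry_commute: "gram_entry V D \<theta> a b = gram_entry V D \<theta> b a"
  by (simp add: gram_entry_def mult.commute)

lemma Lam_upd_Some:
  "Lam D (\<theta>(Some e := t)) u v = (if (u, v) = e \<and> (u, v) \<in> D then t else Lam D \<theta> u v)"
  by (auto simp: Lam_def)

lemma Lam_upd_None: "Lam D (\<theta>(None := t)) = Lam D \<theta>"
  by (auto simp: Lam_def fun_eq_iff)

lemma Lam_eq_0_if_not_edge: "(u, v) \<notin> D \<Longrightarrow> Lam D \<theta> u v = 0"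
  by (simp add: Lam_def)

lemma gram_entry_off_diag:
  assumes "finite V" "digraph V D" "a \<in> V" "b \<in> V" "a \<noteq> b"
  shows "gram_entry V D \<theta> a b =
    (\<Sum>k\<in>V-{a,b}. Lam D \<theta> a k * Lam D \<theta> b k) - Lam D \<theta> a b - Lam D \<theta> b a"
proof -
  have V: "V = insert a (insert b (V-{a,b}))" using assms by auto
  have loops: "Lam D \<theta> a a = 0" "Lam D \<theta> b b = 0"
    using assms(2) by (auto simp: digraph_def Lam_def)
  have "gram_entry V D \<theta> a b = (\<Sum>k\<in>insert a (insert b (V-{a,b})).
      ((if a = k then 1 else 0) - Lam D \<theta> a k) * ((if b = k then 1 else 0) - Lam D \<theta> b k))"
    unfolding gram_entry_def using V by simp
  also have "\<dots> = - Lam D \<theta> b a - Lam D \<theta> a b + (\<Sum>k\<in>V-{a,b}.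
      ((if a = k then 1 else 0) - Lam D \<theta> a k) * ((if b = k then 1 else 0) - Lam D \<theta> b k))"
    using assms loops by simp
  also have "(\<Sum>k\<in>V-{a,b}.
      ((if a = k then 1 else 0) - Lam D \<theta> a k) * ((if b = k then 1 else 0) - Lam D \<theta> b k))
      = (\<Sum>k\<in>V-{a,b}. Lam D \<theta> a k * Lam D \<theta> b k)"
    by (rule sum.cong) auto
  finally show ?thesis by simp
qed

lemma gram_entry_eq_0:
  assumes "a \<noteq> b" "\<not> adjacent D a b" "\<not> common_child D a b"
  shows "gram_entry V D \<theta> a b = 0"
  using assms by (auto simp: gram_entry_def Lam_def adjacent_def common_child_def intro!: sum.neutral)

text \<open>The entry is affine in \<open>\<lambda>_ab\<close> with slope \<open>-1\<close>.\<close>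
lemma exists_gram_entry_nonzero_if_edge:
  assumes "finite V" "digraph V D" "(a, b) \<in> D" "poly_fun X p" "p \<theta>\<^sub>0 \<noteq> 0"
  obtains \<theta> where "p \<theta> \<noteq> 0" "gram_entry V D \<theta> a b \<noteq> 0"
proof -
  have ab: "a \<in> V" "b \<in> V" "a \<noteq> b" using assms(2,3) by (auto simp: digraph_def)
  define r where "r = (\<Sum>k\<in>V-{a,b}. Lam D \<theta>\<^sub>0 a k * Lam D \<theta>\<^sub>0 b k) - Lam D \<theta>\<^sub>0 b a"
  obtain t where "t \<noteq> r" and p: "p (\<theta>\<^sub>0(Some (a, b) := t)) \<noteq> 0"
    using poly_fun_nonzero_upd_avoiding[OF assms(4,5)] by blast
  have "gram_entry V D (\<theta>\<^sub>0(Some (a, b) := t)) a b = r - t"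
    unfolding r_def using gram_entry_off_diag[OF assms(1,2) ab] assms(3) ab
    by (simp add: Lam_upd_Some)
  with \<open>t \<noteq> r\<close> p that show ?thesis by simp
qed

text \<open>With no edge between \<open>a\<close> and \<open>b\<close> the entry is \<open>\<lambda>_ak \<lambda>_bk + r\<close>, where \<open>r\<close> involves neither
  parameter: first make \<open>\<lambda>_bk\<close> nonzero, then choose \<open>\<lambda>_ak \<noteq> -r/\<lambda>_bk\<close>.\<close>
lemma exists_gram_entry_nonzero_if_common_child:
  assumes "finite V" "digraph V D" "a \<noteq> b" "\<not> adjacent D a b" "(a, k) \<in> D" "(b, k) \<in> D"
    and "poly_fun X p" "p \<theta>\<^sub>0 \<noteq> 0"
  obtains \<theta> where "p \<theta> \<noteq> 0" "gram_entry V D \<theta> a b \<noteq> 0"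
proof -
  have V: "a \<in> V" "b \<in> V" "k \<in> V" "k \<noteq> a" "k \<noteq> b"
    using assms(2,5,6) by (auto simp: digraph_def)
  have no_edge: "(a, b) \<notin> D" "(b, a) \<notin> D" using assms(4) by (auto simp: adjacent_def)
  obtain t\<^sub>1 where "t\<^sub>1 \<noteq> 0" and p\<^sub>1: "p (\<theta>\<^sub>0(Some (b, k) := t\<^sub>1)) \<noteq> 0"
    using poly_fun_nonzero_upd_avoiding[OF assms(7,8)] by blast
  define \<theta>\<^sub>1 where "\<theta>\<^sub>1 = \<theta>\<^sub>0(Some (b, k) := t\<^sub>1)"
  define r where "r = (\<Sum>k'\<in>V-{a,b,k}. Lam D \<theta>\<^sub>1 a k' * Lam D \<theta>\<^sub>1 b k')"
  obtain t\<^sub>2 where "t\<^sub>2 \<noteq> - r / t\<^sub>1" and p\<^sub>2: "p (\<theta>\<^sub>1(Some (a, k) := t\<^sub>2)) \<noteq> 0"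
    using poly_fun_nonzero_upd_avoiding[OF assms(7) p\<^sub>1[folded \<theta>\<^sub>1_def]] by blast
  define \<theta> where "\<theta> = \<theta>\<^sub>1(Some (a, k) := t\<^sub>2)"
  have split: "V-{a,b} = insert k (V-{a,b,k})" using V by auto
  have "gram_entry V D \<theta> a b = (\<Sum>k'\<in>V-{a,b}. Lam D \<theta> a k' * Lam D \<theta> b k')"
    using gram_entry_off_diag[OF assms(1,2) V(1,2) assms(3)] no_edge
    by (simp add: Lam_eq_0_if_not_edge)
  also have "\<dots> = Lam D \<theta> a k * Lam D \<theta> b k + (\<Sum>k'\<in>V-{a,b,k}. Lam D \<theta> a k' * Lam D \<theta> b k')"
    unfolding split using assms(1) by simp
  also have "\<dots> = t\<^sub>2 * t\<^sub>1 + r"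
    unfolding r_def \<theta>_def \<theta>\<^sub>1_def using assms(3,5,6) by (auto simp: Lam_upd_Some intro!: sum.cong)
  finally have "gram_entry V D \<theta> a b = t\<^sub>2 * t\<^sub>1 + r" .
  moreover have "t\<^sub>2 * t\<^sub>1 + r \<noteq> 0"
    using \<open>t\<^sub>1 \<noteq> 0\<close> \<open>t\<^sub>2 \<noteq> - r / t\<^sub>1\<close> by (auto simp: field_simps)
  ultimately show ?thesis using p\<^sub>2 that unfolding \<theta>_def by simp
qed

lemma exists_gram_entry_nonzero:
  assumes "finite V" "digraph V D" "a \<noteq> b" "adjacent D a b \<or> common_child D a b"
    and "poly_fun X p" "p \<theta>\<^sub>0 \<noteq> 0"
  obtains \<theta> where "p \<theta> \<noteq> 0" "gram_entry V D \<theta> a b \<noteq> 0"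
proof (cases "adjacent D a b")
  case True
  then show ?thesis
    using exists_gram_entry_nonzero_if_edge[OF assms(1,2) _ assms(5,6)] that gram_entry_commute
    unfolding adjacent_def by metis
next
  case False
  with assms(4) obtain k where "(a, k) \<in> D" "(b, k) \<in> D" by (auto simp: common_child_def)
  with exists_gram_entry_nonzero_if_common_child[OF assms(1-3) False _ _ assms(5,6)] that
  show ?thesis by blast
qed

lemma jac_entry_None: "jac_entry V D None (a, b) \<theta> = gram_entry V D \<theta> a b"
proof -
  have "(\<lambda>t. Kmat V D (\<theta>(None := t)) a b) = (\<lambda>t. t * gram_entry V D \<theta> a b)"
    by (auto simp: Kmat_eq_gram_entry gram_entry_def Lam_upd_None fun_eq_iff)
  moreover have "((\<lambda>t. t * gram_entry V D \<theta> a b) has_field_derivative gram_entry V D \<theta> a b) (at (\<theta> None))"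
    by (auto intro!: derivative_eq_intros)
  ultimately show ?thesis by (simp add: jac_entry_def DERIV_imp_deriv)
qed

lemma jac_indep_singleton_iff:
  "jac_indep V D {col} \<longleftrightarrow> col \<in> jac_cols V \<and>
    \<not> (\<exists>p. poly_fun (params D) p \<and> p \<noteq> (\<lambda>_. 0) \<and>
        (\<forall>x\<in>params D. \<forall>\<theta>. p \<theta> * jac_entry V D x col \<theta> = 0))"
proof -
  have "(\<exists>c. poly_fun (params D) (c col) \<and> c col \<noteq> (\<lambda>_. 0) \<and> P (c col))
      \<longleftrightarrow> (\<exists>p. poly_fun (params D) p \<and> p \<noteq> (\<lambda>_. 0) \<and> P p)" for P
    by (metis fun_upd_same)
  from this[of "\<lambda>q. \<forall>x\<in>params D. \<forall>\<theta>. q \<theta> * jac_entry V D x col \<theta> = 0"]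
  show ?thesis unfolding jac_indep_def by simp
qed

lemma jac_indep_off_diag_iff:
  assumes "finite V" "digraph V D" "a \<in> V" "b \<in> V" "a < b"
  shows "jac_indep V D {(a, b)} \<longleftrightarrow> adjacent D a b \<or> common_child D a b"
proof
  assume indep: "jac_indep V D {(a, b)}"
  show "adjacent D a b \<or> common_child D a b"
  proof (rule ccontr)
    assume "\<not> (adjacent D a b \<or> common_child D a b)"
    then have "Kmat V D \<theta> a b = 0" for \<theta>
      using gram_entry_eq_0[of a b] assms(5) by (simp add: Kmat_eq_gram_entry)
    then have "jac_entry V D x (a, b) \<theta> = 0" for x \<theta>
      by (simp add: jac_entry_def DERIV_imp_deriv)
    moreover have "poly_fun (params D) (\<lambda>_. 1)" by (rule poly_fun.const)
    ultimately have "\<exists>p. poly_fun (params D) p \<and> p \<noteq> (\<lambda>_. 0) \<and>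
        (\<forall>x\<in>params D. \<forall>\<theta>. p \<theta> * jac_entry V D x (a, b) \<theta> = 0)"
      by (intro exI[of _ "\<lambda>_. 1"]) (simp add: fun_eq_iff)
    then show False using indep unfolding jac_indep_singleton_iff by blast
  qed
next
  assume adj: "adjacent D a b \<or> common_child D a b"
  show "jac_indep V D {(a, b)}"
    unfolding jac_indep_singleton_iff
  proof (intro conjI notI)
    show "(a, b) \<in> jac_cols V" using assms by (simp add: jac_cols_def)
  next
    assume "\<exists>p. poly_fun (params D) p \<and> p \<noteq> (\<lambda>_. 0) \<and>
        (\<forall>x\<in>params D. \<forall>\<theta>. p \<theta> * jac_entry V D x (a, b) \<theta> = 0)"
    then obtain p \<theta>\<^sub>0 where p: "poly_fun (params D) p" "p \<theta>\<^sub>0 \<noteq> 0"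
      and relation: "\<And>\<theta>. p \<theta> * gram_entry V D \<theta> a b = 0"
      by (auto simp: params_def jac_entry_None fun_eq_iff)
    obtain \<theta> where "p \<theta> \<noteq> 0" "gram_entry V D \<theta> a b \<noteq> 0"
      using exists_gram_entry_nonzero[OF assms(1,2) less_imp_neq[OF assms(5)] adj p] .
    with relation[of \<theta>] show False by simp
  qed
qed

lemma adjacent_commute: "adjacent D i j \<longleftrightarrow> adjacent D j i"
  by (auto simp: adjacent_def)

lemma common_child_commute: "common_child D i j \<longleftrightarrow> common_child D j i"
  by (auto simp: common_child_def)

theorem lemma3p6:
  fixes V :: "'v::linorder set" and D1 D2 :: "('v \<times> 'v) set" and i j :: 'v
  assumes "finite V"
    and "digraph V D1" and "digraph V D2"
    and "same_jacobian_matroid V D1 D2"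
    and "i \<in> V" and "j \<in> V" and "i \<noteq> j"
  shows "(adjacent D1 i j \<or> common_child D1 i j) \<longleftrightarrow> (adjacent D2 i j \<or> common_child D2 i j)"
proof (cases "i < j")
  case True
  then show ?thesis
    using jac_indep_off_diag_iff[OF assms(1,2,5,6)] jac_indep_off_diag_iff[OF assms(1,3,5,6)] assms(4)
    unfolding same_jacobian_matroid_def by blast
next
  case False
  then have "j < i" using assms(7) by simp
  then show ?thesis
    using jac_indep_off_diag_iff[OF assms(1,2,6,5)] jac_indep_off_diag_iff[OF assms(1,3,6,5)] assms(4)
    unfolding same_jacobian_matroid_def adjacent_commute[of _ i] common_child_commute[of _ i]
    by blast
qed

end
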